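(* Consider a sequence of screening problems indexed by the number of alternatives $k$, with fixed $m$ and $\delta>0$, alternatives labeled so that $\mu_1\ge\dots\ge\mu_k$, and $\mathcal{G}=\{i:\mu_i\ge\mu_m-\delta\}$. Suppose $\limsup_{k\to\infty}|\mathcal{G}|<\infty$. Let a budget allocation algorithm satisfy the two randomization properties below. If the total evaluation budget $B$ satisfies $\lim_{k\to\infty}B/k=0$, then $\limsup_{k\to\infty}\mathrm{PGS}_m=0$.
   Context: A budget allocation algorithm allocates a total of $B$ observations to the $k$ alternatives one at a time (each observation of alternative $i$ is a noisy evaluation with mean $\mu_i$), and when the budget is exhausted outputs a subset $\mathcal{S}$ of $m$ alternatives; $\mathrm{PGS}_m=\Pr\{\mathcal{S}\subseteq\mathcal{G}\}$. Property 1: letting $\mathcal{A}_t$ be the set of alternatives with no observations when the $t$-th observation is allocated, if the algorithm allocates the $t$-th observation to an alternative in $\mathcal{A}_t$, then every alternative in $\mathcal{A}_t$ is selected with equal probability. Property 2: letting $\mathcal{A}$ be the set of alternatives with no observations when the budget is exhausted, if $|\mathcal{A}|\ge m$ and the algorithm chooses its $m$ output alternatives from $\mathcal{A}$, then every $m$-element subset of $\mathcal{A}$ is selected with equal probability. *)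

theory Defs
  imports "HOL-Probability.Probability"
begin

text \<open>Alternatives of the k-th problem are labelled 1..k; observations are numbered 1..B.
  For a run with allocation random variables X (X t = alternative receiving the t-th observation)
  and observation random variables Y (Y t = value of the t-th observation), the history
  sigma-algebra before the t-th allocation is generated by X s, Y s for s < t.\<close>

definition hist_sets :: "'a measure \<Rightarrow> (nat \<Rightarrow> 'a \<Rightarrow> nat) \<Rightarrow> (nat \<Rightarrow> 'a \<Rightarrow> real) \<Rightarrow> nat \<Rightarrow> 'a set set" where
  "hist_sets M X Y t = sets (sigma (space M)
     (\<Union>s\<in>{1..<t}. {X s -` A \<inter> space M | A. True} \<union> {Y s -` A \<inter> space M | A. A \<in> sets borel}))"

definition unobserved :: "nat \<Rightarrow> (nat \<Rightarrow> 'a \<Rightarrow> nat) \<Rightarrow> nat \<Rightarrow> 'a \<Rightarrow> nat set" where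
  "unobserved k X t \<omega> = {1..k} - {X s \<omega> | s. s \<in> {1..<t}}"

definition good_set :: "nat \<Rightarrow> (nat \<Rightarrow> real) \<Rightarrow> nat \<Rightarrow> real \<Rightarrow> nat set" where
  "good_set k mu m \<delta> = {i \<in> {1..k}. mu i \<ge> mu m - \<delta>}"

definition PGS :: "'a measure \<Rightarrow> ('a \<Rightarrow> nat set) \<Rightarrow> nat set \<Rightarrow> real" where
  "PGS M S G = measure M {\<omega> \<in> space M. S \<omega> \<subseteq> G}"

end

theory Submission
  imports Defs
begin

(* A good selection either contains a good alternative a that was observed, hence observed for
   the first time at some t <= B while still unobserved, or consists of never observed
   alternatives. By Property 1, "a is unobserved and X t = a" is as likely as the same event for
   any other alternative b unobserved along with a; at least k - t + 1 alternatives are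
   unobserved and these events are disjoint in b, so the probability is at most 1/(k - t + 1).
   By Property 2, selecting a fixed unobserved m-set T is as likely as selecting any still
   unobserved block {j m + 1 .. j m + m}, j < k div m; the blocks are disjoint and at most B of
   them have been touched, so the probability is at most 1/(k div m - B). Summing,
   PGS <= 2 |G| B / k + 4 m 2^|G| / k, which tends to 0 when B/k -> 0 and |G| stays bounded.
   Neither the means nor the observed values enter the argument. *)

lemma sets_Collect_subset_unobserved:
  assumes "sigma_algebra \<Omega> \<Sigma>"
    and "\<And>s A. s \<in> {1..<t} \<Longrightarrow> X s -` A \<inter> \<Omega> \<in> \<Sigma>"
  shows "{\<omega>\<in>\<Omega>. Q \<subseteq> unobserved k X t \<omega>} \<in> \<Sigma>"
proof -
  interpret sigma_algebra \<Omega> \<Sigma> by fact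
  have "{\<omega>\<in>\<Omega>. \<forall>s\<in>{1..<t}. X s \<omega> \<in> - Q} \<in> \<Sigma>"
  proof (rule sets_Collect_finite_All)
    fix s assume "s \<in> {1..<t}"
    from assms(2)[OF this, of "- Q"] show "{\<omega>\<in>\<Omega>. X s \<omega> \<in> - Q} \<in> \<Sigma>"
      by (simp add: vimage_def Int_def conj_commute)
  qed simp
  moreover have "{\<omega>\<in>\<Omega>. Q \<subseteq> unobserved k X t \<omega>} =
      (if Q \<subseteq> {1..k} then {\<omega>\<in>\<Omega>. \<forall>s\<in>{1..<t}. X s \<omega> \<in> - Q} else {})"
    unfolding unobserved_def by (auto; blast)
  ultimately show ?thesis by simp
qed

lemma Collect_subset_unobserved_in_hist_sets:
  "{\<omega>\<in>space M. Q \<subseteq> unobserved k X t \<omega>} \<in> hist_sets M X Y t"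
proof -
  let ?G = "\<Union>s\<in>{1..<t}. {X s -` A \<inter> space M | A. True} \<union> {Y s -` A \<inter> space M | A. A \<in> sets borel}"
  have G: "?G \<subseteq> Pow (space M)" by auto
  then have "hist_sets M X Y t = sigma_sets (space M) ?G"
    unfolding hist_sets_def by (simp add: sets_measure_of)
  moreover have "{\<omega>\<in>space M. Q \<subseteq> unobserved k X t \<omega>} \<in> sigma_sets (space M) ?G"
  proof (rule sets_Collect_subset_unobserved[OF sigma_algebra_sigma_sets[OF G]])
    fix s A assume "s \<in> {1..<t}"
    then show "X s -` A \<inter> space M \<in> sigma_sets (space M) ?G"
      by (intro sigma_sets.Basic) blast
  qed
  ultimately show ?thesis by simp
qed

lemma Collect_subset_unobserved_in_measurable_sets:
  assumes "\<And>s. s \<in> {1..<t} \<Longrightarrow> X s \<in> measurable M (count_space UNIV)"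
  shows "{\<omega>\<in>space M. Q \<subseteq> unobserved k X t \<omega>} \<in> sets M"
  by (rule sets_Collect_subset_unobserved[OF sets.sigma_algebra_axioms])
    (auto intro!: measurable_sets assms)

lemma card_unobserved_ge: "k - (t - 1) \<le> card (unobserved k X t \<omega>)"
proof -
  have "card ((\<lambda>s. X s \<omega>) ` {1..<t}) \<le> t - 1"
    using card_image_le[of "{1..<t}" "\<lambda>s. X s \<omega>"] by simp
  moreover have "card {1..k} - card ((\<lambda>s. X s \<omega>) ` {1..<t}) \<le> card ({1..k} - (\<lambda>s. X s \<omega>) ` {1..<t})"
    by (rule diff_card_le_card_Diff) simp
  moreover have "{X s \<omega> | s. s \<in> {1..<t}} = (\<lambda>s. X s \<omega>) ` {1..<t}" by auto
  ultimately show ?thesis unfolding unobserved_def by simp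
qed

lemma first_observation_exists:
  assumes "a \<in> {1..k}" "a \<notin> unobserved k X (n + 1) \<omega>"
  obtains t where "t \<in> {1..n}" "a \<in> unobserved k X t \<omega>" "X t \<omega> = a"
proof -
  have ex: "\<exists>s. s \<in> {1..n} \<and> X s \<omega> = a"
    using assms unfolding unobserved_def by auto
  define t where "t = (LEAST s. s \<in> {1..n} \<and> X s \<omega> = a)"
  have t: "t \<in> {1..n} \<and> X t \<omega> = a"
    unfolding t_def by (rule LeastI_ex[OF ex])
  have "X s \<omega> \<noteq> a" if "s \<in> {1..<t}" for s
    using not_less_Least[of s "\<lambda>s. s \<in> {1..n} \<and> X s \<omega> = a"] that t unfolding t_def by auto
  then have "a \<in> unobserved k X t \<omega>"
    using assms(1) unfolding unobserved_def by blast
  with t that show ?thesis by blast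
qed

lemma card_blocks_meeting_le:
  fixes m :: nat
  assumes "finite V" "1 \<le> m" and meets: "\<And>j. j \<in> N \<Longrightarrow> {j*m+1..j*m+m} \<inter> V \<noteq> {}"
  shows "card N \<le> card V"
proof -
  have "N \<subseteq> (\<lambda>x. (x - 1) div m) ` V"
  proof
    fix j assume "j \<in> N"
    then obtain x where "x \<in> V" "x \<in> {j*m+1..j*m+m}" using meets by blast
    moreover from this(2) assms(2) have "(x - 1) div m = j" by (intro div_nat_eqI) (auto simp: mult.commute)
    ultimately show "j \<in> (\<lambda>x. (x - 1) div m) ` V" by blast
  qed
  then have "card N \<le> card ((\<lambda>x. (x - 1) div m) ` V)"
    using assms(1) by (intro card_mono) auto
  also have "\<dots> \<le> card V" by (rule card_image_le[OF assms(1)])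
  finally show ?thesis .
qed

lemma (in finite_measure) of_nat_mult_measure_le_sum_measure_Int:
  assumes A: "A \<in> sets M" and J: "finite J" and C: "\<And>j. j \<in> J \<Longrightarrow> C j \<in> sets M"
    and cover: "\<And>\<omega>. \<omega> \<in> A \<Longrightarrow> n \<le> card {j\<in>J. \<omega> \<in> C j}"
  shows "real n * measure M A \<le> (\<Sum>j\<in>J. measure M (A \<inter> C j))"
proof -
  have int_A: "integrable M (indicator A :: 'a \<Rightarrow> real)"
    using A by (simp add: less_top[symmetric])
  have int_AC: "integrable M (indicator (A \<inter> C j) :: 'a \<Rightarrow> real)" if "j \<in> J" for j
    using A C[OF that] by (simp add: less_top[symmetric])
  have "real n * measure M A = (\<integral>\<omega>. real n * indicator A \<omega> \<partial>M)"
    using A by simp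
  also have "\<dots> \<le> (\<integral>\<omega>. (\<Sum>j\<in>J. indicator (A \<inter> C j) \<omega>) \<partial>M)"
  proof (rule integral_mono)
    fix \<omega>
    have "(\<Sum>j\<in>J. indicator (A \<inter> C j) \<omega>) = indicator A \<omega> * real (card {j\<in>J. \<omega> \<in> C j})"
      using J by (simp add: indicator_def sum.If_cases Int_def conj_commute)
    then show "real n * indicator A \<omega> \<le> (\<Sum>j\<in>J. indicator (A \<inter> C j) \<omega>)"
      using cover[of \<omega>] by (simp add: indicator_def)
  qed (use int_A int_AC in auto)
  also have "\<dots> = (\<Sum>j\<in>J. measure M (A \<inter> C j))"
    using A C int_AC by (simp add: Bochner_Integration.integral_sum)
  finally show ?thesis .
qed

lemma (in prob_space) of_nat_mult_prob_le_1_by_disjoint_copies: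
  assumes "A \<in> events" "finite J" "\<And>j. j \<in> J \<Longrightarrow> C j \<in> events"
    and "\<And>\<omega>. \<omega> \<in> A \<Longrightarrow> n \<le> card {j\<in>J. \<omega> \<in> C j}"
    and "\<And>j. j \<in> J \<Longrightarrow> D j \<in> events" "disjoint_family_on D J"
    and "\<And>j. j \<in> J \<Longrightarrow> prob (A \<inter> C j) = prob (D j)"
  shows "real n * prob A \<le> 1"
proof -
  have "real n * prob A \<le> (\<Sum>j\<in>J. prob (D j))"
    using of_nat_mult_measure_le_sum_measure_Int[OF assms(1-4)] assms(7) by simp
  also have "\<dots> = prob (\<Union>j\<in>J. D j)"
    using assms(2,5,6) by (intro finite_measure_finite_Union[symmetric]) auto
  also have "\<dots> \<le> 1" by simp
  finally show ?thesis .
qed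

locale randomized_screening = prob_space M
  for M :: "'a measure" and k m B :: nat
    and X :: "nat \<Rightarrow> 'a \<Rightarrow> nat" and Y :: "nat \<Rightarrow> 'a \<Rightarrow> real" and S :: "'a \<Rightarrow> nat set" +
  assumes m_pos: "1 \<le> m"
    and X_measurable: "\<And>t. t \<in> {1..B} \<Longrightarrow> X t \<in> measurable M (count_space UNIV)"
    and S_measurable: "S \<in> measurable M (count_space UNIV)"
    and card_S: "\<And>\<omega>. \<omega> \<in> space M \<Longrightarrow> card (S \<omega>) = m"
    and property1: "\<And>t E a b. t \<in> {1..B} \<Longrightarrow> E \<in> hist_sets M X Y t \<Longrightarrow>
        E \<subseteq> {\<omega>. a \<in> unobserved k X t \<omega> \<and> b \<in> unobserved k X t \<omega>} \<Longrightarrow>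
        prob (E \<inter> {\<omega>\<in>space M. X t \<omega> = a}) = prob (E \<inter> {\<omega>\<in>space M. X t \<omega> = b})"
    and property2: "\<And>E T T'. E \<in> hist_sets M X Y (B + 1) \<Longrightarrow> card T = m \<Longrightarrow> card T' = m \<Longrightarrow>
        E \<subseteq> {\<omega>. T \<subseteq> unobserved k X (B + 1) \<omega> \<and> T' \<subseteq> unobserved k X (B + 1) \<omega>} \<Longrightarrow>
        prob (E \<inter> {\<omega>\<in>space M. S \<omega> = T}) = prob (E \<inter> {\<omega>\<in>space M. S \<omega> = T'})"
begin

definition first_observed :: "nat \<Rightarrow> nat \<Rightarrow> 'a set" where
  "first_observed a t = {\<omega>\<in>space M. a \<in> unobserved k X t \<omega> \<and> X t \<omega> = a}"

definition selected_unobserved :: "nat set \<Rightarrow> 'a set" where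
  "selected_unobserved T = {\<omega>\<in>space M. T \<subseteq> unobserved k X (B + 1) \<omega> \<and> S \<omega> = T}"

lemma Collect_subset_unobserved_events:
  "t \<le> B + 1 \<Longrightarrow> {\<omega>\<in>space M. Q \<subseteq> unobserved k X t \<omega>} \<in> events"
  by (rule Collect_subset_unobserved_in_measurable_sets) (auto intro: X_measurable)

lemma X_eq_events: "t \<in> {1..B} \<Longrightarrow> {\<omega>\<in>space M. X t \<omega> = a} \<in> events"
  using pred_count_space_const1[OF X_measurable] by (simp add: pred_def)

lemma S_eq_events: "{\<omega>\<in>space M. S \<omega> = T} \<in> events"
  using pred_count_space_const1[OF S_measurable] by (simp add: pred_def)

lemma first_observed_events:
  assumes "t \<in> {1..B}"
  shows "first_observed a t \<in> events"
proof -
  have "first_observed a t = {\<omega>\<in>space M. {a} \<subseteq> unobserved k X t \<omega>} \<inter> {\<omega>\<in>space M. X t \<omega> = a}"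
    unfolding first_observed_def by auto
  also have "\<dots> \<in> events"
    using assms by (intro sets.Int Collect_subset_unobserved_events X_eq_events) auto
  finally show ?thesis .
qed

lemma selected_unobserved_events: "selected_unobserved T \<in> events"
proof -
  have "selected_unobserved T = {\<omega>\<in>space M. T \<subseteq> unobserved k X (B + 1) \<omega>} \<inter> {\<omega>\<in>space M. S \<omega> = T}"
    unfolding selected_unobserved_def by auto
  also have "\<dots> \<in> events"
    by (intro sets.Int Collect_subset_unobserved_events S_eq_events) simp
  finally show ?thesis .
qed

lemma prob_first_observed_mult_le_1:
  assumes t: "t \<in> {1..B}"
  shows "real (k - (t - 1)) * prob (first_observed a t) \<le> 1"
proof -
  define E where "E b = {\<omega>\<in>space M. {a, b} \<subseteq> unobserved k X t \<omega>}" for b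
  define C where "C b = {\<omega>\<in>space M. {b} \<subseteq> unobserved k X t \<omega>}" for b
  show ?thesis
  proof (rule of_nat_mult_prob_le_1_by_disjoint_copies
      [where J = "{1..k}" and C = C and D = "\<lambda>b. E b \<inter> {\<omega>\<in>space M. X t \<omega> = b}"])
    fix \<omega> assume "\<omega> \<in> first_observed a t"
    then have "{b\<in>{1..k}. \<omega> \<in> C b} = unobserved k X t \<omega>"
      unfolding first_observed_def C_def unobserved_def by auto
    then show "k - (t - 1) \<le> card {b\<in>{1..k}. \<omega> \<in> C b}"
      by (metis card_unobserved_ge)
  next
    fix b
    have "first_observed a t \<inter> C b = E b \<inter> {\<omega>\<in>space M. X t \<omega> = a}"
      unfolding first_observed_def C_def E_def by auto
    moreover have "E b \<in> hist_sets M X Y t"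
      unfolding E_def by (rule Collect_subset_unobserved_in_hist_sets)
    ultimately show "prob (first_observed a t \<inter> C b) = prob (E b \<inter> {\<omega>\<in>space M. X t \<omega> = b})"
      using property1[OF t, of "E b" a b] unfolding E_def by auto
  next
    show "first_observed a t \<in> events" using t by (rule first_observed_events)
  next
    show "C b \<in> events" "E b \<inter> {\<omega>\<in>space M. X t \<omega> = b} \<in> events" if "b \<in> {1..k}" for b
      unfolding C_def E_def using t by (intro sets.Int Collect_subset_unobserved_events X_eq_events; simp)+
  next
    show "disjoint_family_on (\<lambda>b. E b \<inter> {\<omega>\<in>space M. X t \<omega> = b}) {1..k}"
      unfolding disjoint_family_on_def by auto
  qed simp
qed

lemma prob_selected_unobserved_mult_le_1:
  assumes T: "card T = m"
  shows "real (k div m - B) * prob (selected_unobserved T) \<le> 1"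
proof -
  define I where "I j = {j*m+1..j*m+m}" for j
  define E where "E j = {\<omega>\<in>space M. T \<union> I j \<subseteq> unobserved k X (B + 1) \<omega>}" for j
  define C where "C j = {\<omega>\<in>space M. I j \<subseteq> unobserved k X (B + 1) \<omega>}" for j
  have I_sub: "I j \<subseteq> {1..k}" if "j < k div m" for j
  proof -
    have "Suc j * m \<le> k div m * m" using that by (intro mult_le_mono1) simp
    also have "\<dots> \<le> k" by simp
    finally show ?thesis unfolding I_def by auto
  qed
  show ?thesis
  proof (rule of_nat_mult_prob_le_1_by_disjoint_copies
      [where J = "{..<k div m}" and C = C and D = "\<lambda>j. E j \<inter> {\<omega>\<in>space M. S \<omega> = I j}"])
    fix \<omega> assume \<omega>: "\<omega> \<in> selected_unobserved T"
    define V where "V = (\<lambda>s. X s \<omega>) ` {1..B}"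
    let ?bad = "{j\<in>{..<k div m}. \<omega> \<notin> C j}"
    have "card ?bad \<le> card V"
    proof (rule card_blocks_meeting_le[OF _ m_pos])
      fix j assume j: "j \<in> ?bad"
      with \<omega> obtain x where x: "x \<in> I j" "x \<notin> unobserved k X (B + 1) \<omega>"
        unfolding selected_unobserved_def C_def by auto
      moreover have "x \<in> {1..k}" using j subsetD[OF I_sub x(1)] by simp
      ultimately have "x \<in> V" unfolding unobserved_def V_def by auto
      with x show "{j*m+1..j*m+m} \<inter> V \<noteq> {}" unfolding I_def by auto
    qed (simp add: V_def)
    also have "card V \<le> B"
      using card_image_le[of "{1..B}" "\<lambda>s. X s \<omega>"] unfolding V_def by simp
    finally have "card ?bad \<le> B" .
    moreover have "card {..<k div m} - card ?bad \<le> card ({..<k div m} - ?bad)"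
      by (rule diff_card_le_card_Diff) simp
    moreover have "{..<k div m} - ?bad = {j\<in>{..<k div m}. \<omega> \<in> C j}" by blast
    ultimately show "k div m - B \<le> card {j\<in>{..<k div m}. \<omega> \<in> C j}" by simp
  next
    fix j
    have "selected_unobserved T \<inter> C j = E j \<inter> {\<omega>\<in>space M. S \<omega> = T}"
      unfolding selected_unobserved_def C_def E_def by auto
    moreover have "E j \<in> hist_sets M X Y (B + 1)"
      unfolding E_def by (rule Collect_subset_unobserved_in_hist_sets)
    moreover have "card (I j) = m" unfolding I_def by simp
    ultimately show "prob (selected_unobserved T \<inter> C j) = prob (E j \<inter> {\<omega>\<in>space M. S \<omega> = I j})"
      using property2[of "E j" T "I j"] T unfolding E_def by auto
  next
    have "I i \<noteq> I j" if "i \<noteq> j" for i j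
    proof
      assume "I i = I j"
      then have "i*m + 1 \<in> I j" unfolding I_def using m_pos by auto
      then have "(i*m + 1 - 1) div m = j"
        unfolding I_def by (intro div_nat_eqI) (auto simp: mult.commute)
      with that m_pos show False by simp
    qed
    then show "disjoint_family_on (\<lambda>j. E j \<inter> {\<omega>\<in>space M. S \<omega> = I j}) {..<k div m}"
      unfolding disjoint_family_on_def by auto
  next
    show "C j \<in> events" "E j \<inter> {\<omega>\<in>space M. S \<omega> = I j} \<in> events" for j
      unfolding C_def E_def by (intro sets.Int Collect_subset_unobserved_events S_eq_events; simp)+
  qed (simp_all add: selected_unobserved_events)
qed

lemma prob_first_observed_le:
  assumes t: "t \<in> {1..B}" and budget: "2 * B \<le> k"
  shows "prob (first_observed a t) \<le> 2 / real k"
proof -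
  have "real k / 2 \<le> real (k - (t - 1))" using t budget by auto
  then have "real k / 2 * prob (first_observed a t) \<le> 1"
    using prob_first_observed_mult_le_1[OF t] by (meson measure_nonneg mult_right_mono order_trans)
  moreover have "k > 0" using t budget by auto
  ultimately show ?thesis by (simp add: field_simps)
qed

lemma prob_selected_unobserved_le:
  assumes T: "card T = m" and budget: "4 * m * B \<le> k" and "2 * m \<le> k"
  shows "prob (selected_unobserved T) \<le> 4 * real m / real k"
proof -
  have "k mod m < m" using m_pos by simp
  then have "k < k div m * m + m" using div_mult_mod_eq[of k m] by linarith
  then have "real k < real (k div m) * real m + real m" by (simp flip: of_nat_mult of_nat_add)
  moreover have "4 * (real m * real B) \<le> real k" "2 * real m \<le> real k"
    using assms(2,3) by (simp_all flip: of_nat_mult)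
  ultimately have "real k / (4 * real m) \<le> real (k div m) - real B"
    using m_pos by (simp add: field_simps)
  also have "\<dots> = real (k div m - B)"
  proof -
    have "real B \<le> real (k div m)"
      using calculation by (smt (verit) divide_nonneg_nonneg of_nat_0_le_iff)
    then show ?thesis by (simp add: of_nat_diff)
  qed
  finally have "real k / (4 * real m) * prob (selected_unobserved T) \<le> 1"
    using prob_selected_unobserved_mult_le_1[OF T] by (meson measure_nonneg mult_right_mono order_trans)
  moreover have "k > 0" using assms(3) m_pos by auto
  ultimately show ?thesis using m_pos by (simp add: field_simps)
qed

lemma PGS_le:
  assumes G: "G \<subseteq> {1..k}" and "card G \<le> c" and "4 * m * B \<le> k" and "2 * m \<le> k"
  shows "PGS M S G \<le> 2 * real c * (real B / real k) + 2 ^ c * (4 * real m / real k)"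
proof -
  define \<T> where "\<T> = {T. T \<subseteq> G \<and> card T = m}"
  have fin: "finite G" "finite \<T>"
    using G finite_subset unfolding \<T>_def by (auto intro: rev_finite_subset[of "Pow G"])
  have "card \<T> = card G choose m"
    unfolding \<T>_def using fin(1) by (rule n_subsets)
  also have "\<dots> \<le> 2 ^ card G" by (rule binomial_le_pow2)
  also have "\<dots> \<le> 2 ^ c" using \<open>card G \<le> c\<close> by (simp add: power_increasing)
  finally have card_\<T>: "card \<T> \<le> 2 ^ c" .
  have "2 * B \<le> 4 * m * B" using m_pos by simp
  with assms(3) have "2 * B \<le> k" by linarith
  let ?F1 = "\<Union>a\<in>G. \<Union>t\<in>{1..B}. first_observed a t"
  let ?F2 = "\<Union>T\<in>\<T>. selected_unobserved T"
  have "{\<omega>\<in>space M. S \<omega> \<subseteq> G} \<subseteq> ?F1 \<union> ?F2"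
  proof safe
    fix \<omega> assume \<omega>: "\<omega> \<in> space M" "S \<omega> \<subseteq> G" "\<omega> \<notin> ?F2"
    then have "S \<omega> \<in> \<T>" unfolding \<T>_def using card_S by auto
    with \<omega> obtain a where a: "a \<in> S \<omega>" "a \<notin> unobserved k X (B + 1) \<omega>"
      unfolding selected_unobserved_def by auto
    with \<omega> G obtain t where "t \<in> {1..B}" "a \<in> unobserved k X t \<omega>" "X t \<omega> = a"
      by (meson first_observation_exists subsetD)
    with \<omega> a show "\<omega> \<in> ?F1" unfolding first_observed_def by blast
  qed
  then have "PGS M S G \<le> prob (?F1 \<union> ?F2)"
    unfolding PGS_def using fin
    by (intro finite_measure_mono sets.Un sets.finite_UN)
      (auto intro: first_observed_events selected_unobserved_events)
  also have "\<dots> \<le> prob ?F1 + prob ?F2"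
    using fin by (intro measure_Un_le sets.finite_UN)
      (auto intro: first_observed_events selected_unobserved_events)
  also have "prob ?F1 \<le> (\<Sum>a\<in>G. \<Sum>t\<in>{1..B}. prob (first_observed a t))"
    using fin by (intro order_trans[OF measure_UNION_le] sum_mono measure_UNION_le)
      (auto intro!: first_observed_events)
  also have "\<dots> \<le> (\<Sum>a\<in>G. \<Sum>t\<in>{1..B}. 2 / real k)"
    using \<open>2 * B \<le> k\<close> by (intro sum_mono prob_first_observed_le)
  also have "\<dots> \<le> 2 * real c * (real B / real k)"
    using \<open>card G \<le> c\<close> by (auto simp: field_simps intro!: divide_right_mono mult_left_mono)
  also have "prob ?F2 \<le> (\<Sum>T\<in>\<T>. prob (selected_unobserved T))"
    using fin by (intro measure_UNION_le) (auto intro!: selected_unobserved_events)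
  also have "\<dots> \<le> (\<Sum>T\<in>\<T>. 4 * real m / real k)"
    using assms(3,4) by (intro sum_mono prob_selected_unobserved_le) (simp_all add: \<T>_def)
  also have "\<dots> = real (card \<T>) * (4 * real m / real k)" by simp
  also have "\<dots> \<le> 2 ^ c * (4 * real m / real k)"
    using card_\<T> by (intro mult_right_mono) (simp_all add: numeral_power_le_of_nat_cancel_iff)
  finally show ?thesis by simp
qed

end

lemma eventually_le_if_limsup_finite:
  fixes f :: "nat \<Rightarrow> nat"
  assumes "limsup (\<lambda>k. ereal (real (f k))) < \<infinity>"
  obtains c where "\<forall>\<^sub>F k in sequentially. f k \<le> c"
proof -
  obtain c :: nat where "limsup (\<lambda>k. ereal (real (f k))) < ereal (real c)"
    using assms less_PInf_Ex_of_nat by auto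
  then have "\<forall>\<^sub>F k in sequentially. f k \<le> c"
    by (rule eventually_mono[OF Limsup_lessD]) simp
  then show ?thesis by (rule that)
qed

lemma eventually_mult_le_if_ratio_tendsto_0:
  fixes B :: "nat \<Rightarrow> nat"
  assumes "(\<lambda>k. real (B k) / real k) \<longlonglongrightarrow> 0" and "0 < c"
  shows "\<forall>\<^sub>F k in sequentially. c * B k \<le> k"
proof -
  have "\<forall>\<^sub>F k in sequentially. real (B k) / real k < 1 / real c"
    using assms by (intro order_tendstoD(2)) auto
  with eventually_gt_at_top[of 0] show ?thesis
  proof eventually_elim
    case (elim k)
    then have "real c * real (B k) < real k" using assms(2) by (simp add: field_simps)
    then show ?case by (simp flip: of_nat_mult)
  qed
qed

theorem mainTheorem6:
  fixes m :: nat and \<delta> :: real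
    and mu :: "nat \<Rightarrow> nat \<Rightarrow> real"      \<comment> \<open>mu k i = mean of alternative i in problem k\<close>
    and B :: "nat \<Rightarrow> nat"                 \<comment> \<open>budget of problem k\<close>
    and M :: "nat \<Rightarrow> 'a measure"           \<comment> \<open>probability space of problem k\<close>
    and X :: "nat \<Rightarrow> nat \<Rightarrow> 'a \<Rightarrow> nat"     \<comment> \<open>X k t = alternative receiving the t-th observation\<close>
    and Y :: "nat \<Rightarrow> nat \<Rightarrow> 'a \<Rightarrow> real"    \<comment> \<open>Y k t = value of the t-th observation\<close>
    and S :: "nat \<Rightarrow> 'a \<Rightarrow> nat set"       \<comment> \<open>S k = selected subset\<close>
  assumes m_pos: "m \<ge> 1"
    and delta_pos: "\<delta> > 0"
    and sorted: "\<And>k i j. k \<ge> m \<Longrightarrow> 1 \<le> i \<Longrightarrow> i \<le> j \<Longrightarrow> j \<le> k \<Longrightarrow> mu k j \<le> mu k i"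
    and prob: "\<And>k. k \<ge> m \<Longrightarrow> prob_space (M k)"
    and X_meas: "\<And>k t. k \<ge> m \<Longrightarrow> t \<in> {1..B k} \<Longrightarrow> X k t \<in> measurable (M k) (count_space UNIV)"
    and X_range: "\<And>k t \<omega>. k \<ge> m \<Longrightarrow> t \<in> {1..B k} \<Longrightarrow> \<omega> \<in> space (M k) \<Longrightarrow> X k t \<omega> \<in> {1..k}"
    and Y_int: "\<And>k t. k \<ge> m \<Longrightarrow> t \<in> {1..B k} \<Longrightarrow> integrable (M k) (Y k t)"
    and Y_mean: "\<And>k t i E. k \<ge> m \<Longrightarrow> t \<in> {1..B k} \<Longrightarrow> E \<in> hist_sets (M k) (X k) (Y k) t \<Longrightarrow>
        (\<integral>\<omega>. indicator (E \<inter> {\<omega>\<in>space (M k). X k t \<omega> = i}) \<omega> * Y k t \<omega> \<partial>M k)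
          = mu k i * measure (M k) (E \<inter> {\<omega>\<in>space (M k). X k t \<omega> = i})"
    and S_meas: "\<And>k. k \<ge> m \<Longrightarrow> S k \<in> measurable (M k) (count_space UNIV)"
    and S_range: "\<And>k \<omega>. k \<ge> m \<Longrightarrow> \<omega> \<in> space (M k) \<Longrightarrow> S k \<omega> \<subseteq> {1..k} \<and> card (S k \<omega>) = m"
    and property1: "\<And>k t E a b. k \<ge> m \<Longrightarrow> t \<in> {1..B k} \<Longrightarrow> E \<in> hist_sets (M k) (X k) (Y k) t \<Longrightarrow>
        E \<subseteq> {\<omega>. a \<in> unobserved k (X k) t \<omega> \<and> b \<in> unobserved k (X k) t \<omega>} \<Longrightarrow>
        measure (M k) (E \<inter> {\<omega>\<in>space (M k). X k t \<omega> = a})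
          = measure (M k) (E \<inter> {\<omega>\<in>space (M k). X k t \<omega> = b})"
    and property2: "\<And>k E T T'. k \<ge> m \<Longrightarrow> E \<in> hist_sets (M k) (X k) (Y k) (B k + 1) \<Longrightarrow>
        card T = m \<Longrightarrow> card T' = m \<Longrightarrow>
        E \<subseteq> {\<omega>. T \<subseteq> unobserved k (X k) (B k + 1) \<omega> \<and> T' \<subseteq> unobserved k (X k) (B k + 1) \<omega>} \<Longrightarrow>
        measure (M k) (E \<inter> {\<omega>\<in>space (M k). S k \<omega> = T})
          = measure (M k) (E \<inter> {\<omega>\<in>space (M k). S k \<omega> = T'})"
    and G_bounded: "limsup (\<lambda>k. ereal (real (card (good_set k (mu k) m \<delta>)))) < \<infinity>"
    and budget: "(\<lambda>k. real (B k) / real k) \<longlonglongrightarrow> 0"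
  shows "limsup (\<lambda>k. ereal (PGS (M k) (S k) (good_set k (mu k) m \<delta>))) = 0"
proof -
  have run: "randomized_screening (M k) k m (B k) (X k) (Y k) (S k)" if "k \<ge> m" for k
    using that S_range
    by (intro randomized_screening.intro randomized_screening_axioms.intro
        prob m_pos X_meas S_meas property1 property2) (simp_all add: S_range)
  obtain c where card_G: "\<forall>\<^sub>F k in sequentially. card (good_set k (mu k) m \<delta>) \<le> c"
    using eventually_le_if_limsup_finite[OF G_bounded] .
  have budget_small: "\<forall>\<^sub>F k in sequentially. 4 * m * B k \<le> k"
    using m_pos by (intro eventually_mult_le_if_ratio_tendsto_0[OF budget]) simp
  define bound where "bound k = 2 * real c * (real (B k) / real k) + 2 ^ c * (4 * real m / real k)" for k
  have PGS_le_bound: "\<forall>\<^sub>F k in sequentially. PGS (M k) (S k) (good_set k (mu k) m \<delta>) \<le> bound k"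
    using card_G budget_small eventually_ge_at_top[of "2 * m"]
  proof eventually_elim
    case (elim k)
    then have "k \<ge> m" by simp
    have "good_set k (mu k) m \<delta> \<subseteq> {1..k}" by (auto simp: good_set_def)
    from randomized_screening.PGS_le[OF run[OF \<open>k \<ge> m\<close>] this elim] show ?case
      unfolding bound_def .
  qed
  have "bound \<longlonglongrightarrow> 2 * real c * 0 + 2 ^ c * 0"
    unfolding bound_def by (intro tendsto_add tendsto_mult_left budget lim_const_over_n)
  then have "(\<lambda>k. PGS (M k) (S k) (good_set k (mu k) m \<delta>)) \<longlonglongrightarrow> 0"
    by (intro tendsto_sandwich[OF _ PGS_le_bound tendsto_const]) (simp_all add: PGS_def)
  then show ?thesis
    by (simp add: lim_imp_Limsup zero_ereal_def)
qed

end
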